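(* For $n\ge 2$, let $\overline{\mathcal M}_{=}(n)$ be the number of MAU pairs $(u,v)$ of binary words with $|u|=|v|=n$ and $|u|_c=|v|_c$ for all $c\in\{a,b\}$. Then $$\overline{\mathcal M}_{=}(n)=2\sum_{i=1}^{n-1}\frac{1}{n-1}\binom{n-1}{i}\binom{n-1}{i-1}.$$
   Context: Let $\Sigma=\{a,b\}$. For a word $w$ and a letter $c$, $|w|_c$ denotes the number of occurrences of $c$ in $w$. Two words $x,y$ are abelian equivalent, written $x\sim_{\mathrm{abl}}y$, if $|x|_c=|y|_c$ for all $c\in\Sigma$. For words $u,v$: a pair $(x,y)$ is an internal abelian-border of $(u,v)$ if $x$ is a nonempty proper suffix of $u$, $y$ is a proper prefix of $v$, and $x\sim_{\mathrm{abl}}y$; it is an external abelian-border of $(u,v)$ if $x$ is a nonempty proper prefix of $u$, $y$ is a proper suffix of $v$, and $x\sim_{\mathrm{abl}}y$. The pair $(u,v)$ is mutually abelian-bordered (MAB) if it has both an internal and an external abelian-border, and mutually abelian-unbordered (MAU) if it has neither. *)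

theory Defs
  imports Complex_Main
begin

datatype letter = a | b

type_synonym word = "letter list"

definition abel_eq :: "word \<Rightarrow> word \<Rightarrow> bool" where
  "abel_eq x y \<longleftrightarrow> (\<forall>c. count_list x c = count_list y c)"

definition proper_prefix :: "word \<Rightarrow> word \<Rightarrow> bool" where
  "proper_prefix x u \<longleftrightarrow> (\<exists>z. u = x @ z \<and> z \<noteq> [])"

definition proper_suffix :: "word \<Rightarrow> word \<Rightarrow> bool" where
  "proper_suffix x u \<longleftrightarrow> (\<exists>z. u = z @ x \<and> z \<noteq> [])"

definition internal_abel_border :: "word \<Rightarrow> word \<Rightarrow> word \<Rightarrow> word \<Rightarrow> bool" where
  "internal_abel_border u v x y \<longleftrightarrow>
     x \<noteq> [] \<and> proper_suffix x u \<and> proper_prefix y v \<and> abel_eq x y"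

definition external_abel_border :: "word \<Rightarrow> word \<Rightarrow> word \<Rightarrow> word \<Rightarrow> bool" where
  "external_abel_border u v x y \<longleftrightarrow>
     x \<noteq> [] \<and> proper_prefix x u \<and> proper_suffix y v \<and> abel_eq x y"

definition MAU :: "word \<Rightarrow> word \<Rightarrow> bool" where
  "MAU u v \<longleftrightarrow> \<not> (\<exists>x y. internal_abel_border u v x y) \<and>
                 \<not> (\<exists>x y. external_abel_border u v x y)"

definition M_eq :: "nat \<Rightarrow> nat" where
  "M_eq n = card {(u, v). length u = n \<and> length v = n \<and> abel_eq u v \<and> MAU u v}"

end

theory Submission
  imports Defs
begin

text \<open>
  Reading u from the left and v from the right at the same time turns a pair of words of
  length n into a lattice path with steps +1 (a against b), -1 (b against a) and two kinds
  of flat steps (a against a, b against b); its height at time k is the number of a's in the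
  length-k prefix of u minus that in the length-k suffix of v.  External abelian borders
  are returns of the path to 0 before time n, abelian equivalence is a return at time n,
  and for abelian-equivalent words the internal borders are exactly the complements of the
  external ones.  Hence the pairs counted are the first-return paths of length n = m + 1.
  Up to mirroring, such a path stays positive for m steps, ends there at height 1, and
  then steps down.  A step with weights 1, 2, 1 behaves like two unit steps of a simple
  walk, so the reflection principle (carried out as a recurrence) counts these paths as
  C(2m-1, m) - C(2m-1, m+1) = C(2m, m+1)/m, which by Vandermonde's identity is the
  Narayana sum on the right-hand side.
\<close>

lemma count_a_plus_count_b: "count_list x a + count_list x b = length x"
proof (induction x)
  case (Cons c x)
  then show ?case by (cases c) auto
qed simp

lemma abel_eq_iff_count_a:
  "abel_eq x y \<longleftrightarrow> length x = length y \<and> count_list x a = count_list y a"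
  unfolding abel_eq_def
  by (metis count_a_plus_count_b add_left_cancel letter.exhaust)

lemma abel_eq_commute: "abel_eq x y \<longleftrightarrow> abel_eq y x"
  by (auto simp: abel_eq_def)

lemma abel_eq_complement:
  assumes "abel_eq (x @ x') (y @ y')" and "abel_eq x' y"
  shows "abel_eq x y'"
  using assms by (auto simp: abel_eq_def)

lemma internal_border_iff_external_border:
  assumes "abel_eq u v"
  shows "(\<exists>x y. internal_abel_border u v x y) \<longleftrightarrow> (\<exists>x y. external_abel_border u v x y)"
proof
  assume "\<exists>x y. internal_abel_border u v x y"
  then obtain x y z z' where "x \<noteq> []" "z \<noteq> []" "z' \<noteq> []" and uv: "u = z @ x" "v = y @ z'"
    and xy: "abel_eq x y"
    unfolding internal_abel_border_def proper_suffix_def proper_prefix_def by blast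
  moreover from xy \<open>x \<noteq> []\<close> have "y \<noteq> []" by (auto simp: abel_eq_iff_count_a)
  moreover have "abel_eq z z'" using abel_eq_complement assms xy uv by blast
  ultimately show "\<exists>x y. external_abel_border u v x y"
    unfolding external_abel_border_def proper_suffix_def proper_prefix_def by blast
next
  assume "\<exists>x y. external_abel_border u v x y"
  then obtain x y z z' where "x \<noteq> []" "z \<noteq> []" "z' \<noteq> []" and uv: "u = x @ z" "v = z' @ y"
    and xy: "abel_eq x y"
    unfolding external_abel_border_def proper_suffix_def proper_prefix_def by blast
  moreover from xy \<open>x \<noteq> []\<close> have "y \<noteq> []" by (auto simp: abel_eq_iff_count_a)
  moreover have "abel_eq z z'"
    using abel_eq_complement[of z' y x z] assms xy uv abel_eq_commute by blast
  ultimately show "\<exists>x y. internal_abel_border u v x y"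
    unfolding internal_abel_border_def proper_suffix_def proper_prefix_def by blast
qed

lemma external_border_iff:
  assumes "length u = n" and "length v = n"
  shows "(\<exists>x y. external_abel_border u v x y) \<longleftrightarrow>
    (\<exists>k. 0 < k \<and> k < n \<and> abel_eq (take k u) (drop (n - k) v))"
proof
  assume "\<exists>x y. external_abel_border u v x y"
  then obtain x y z z' where "x \<noteq> []" "z \<noteq> []" "z' \<noteq> []" and uv: "u = x @ z" "v = z' @ y"
    and xy: "abel_eq x y"
    unfolding external_abel_border_def proper_suffix_def proper_prefix_def by blast
  moreover have "length y = length x" using xy by (simp add: abel_eq_iff_count_a)
  ultimately show "\<exists>k. 0 < k \<and> k < n \<and> abel_eq (take k u) (drop (n - k) v)"
    using assms by (intro exI[of _ "length x"]) auto
next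
  assume "\<exists>k. 0 < k \<and> k < n \<and> abel_eq (take k u) (drop (n - k) v)"
  then obtain k where "0 < k" "k < n" "abel_eq (take k u) (drop (n - k) v)" by blast
  with assms show "\<exists>x y. external_abel_border u v x y"
    unfolding external_abel_border_def proper_suffix_def proper_prefix_def
    by (intro exI[of _ "take k u"] exI[of _ "drop (n - k) v"] conjI
        exI[of _ "drop k u"] exI[of _ "take (n - k) v"]) auto
qed

definition step :: "letter \<times> letter \<Rightarrow> int" where
  "step c = (if fst c = a then 1 else 0) - (if snd c = a then 1 else 0)"

definition height :: "(letter \<times> letter) list \<Rightarrow> int" where
  "height w = (\<Sum>c\<leftarrow>w. step c)"

lemma height_Nil [simp]: "height [] = 0"
  by (simp add: height_def)

lemma height_snoc [simp]: "height (w @ [c]) = height w + step c"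
  by (simp add: height_def)

lemma height_zip:
  "length x = length y \<Longrightarrow> height (zip x y) = int (count_list x a) - int (count_list y a)"
  by (induction x y rule: list_induct2) (auto simp: height_def step_def)

lemma step_swap [simp]: "step (prod.swap c) = - step c"
  by (simp add: step_def)

lemma height_map_swap [simp]: "height (map prod.swap w) = - height w"
  by (induction w rule: rev_induct) simp_all

lemma abs_step_le_1: "\<bar>step c\<bar> \<le> 1"
  by (simp add: step_def)

lemma step_eq_minus_one_iff: "step c = -1 \<longleftrightarrow> c = (b, a)"
  by (cases c; cases "fst c"; cases "snd c") (simp_all add: step_def)

lemma height_take_Suc:
  "k < length w \<Longrightarrow> height (take (Suc k) w) = height (take k w) + step (w ! k)"
  by (simp add: take_Suc_conv_app_nth)

lemma UNIV_letter_pair: "(UNIV :: (letter \<times> letter) set) = {(a, a), (a, b), (b, a), (b, b)}"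
  by (auto intro: letter.exhaust)

lemma finite_letter_pair: "finite (UNIV :: (letter \<times> letter) set)"
  by (simp add: UNIV_letter_pair)

lemma sum_UNIV_letter_pair:
  "(\<Sum>c\<in>UNIV. f c) = f (a, a) + f (a, b) + f (b, a) + f (b, b)"
  by (simp add: UNIV_letter_pair add.assoc)

lemma finite_paths_length: "finite {w :: (letter \<times> letter) list. length w = n}"
  using finite_lists_length_eq[OF finite_letter_pair, of n] by simp

definition first_return_paths :: "nat \<Rightarrow> (letter \<times> letter) list set" where
  "first_return_paths n =
     {w. length w = n \<and> height w = 0 \<and> (\<forall>k. 0 < k \<and> k < n \<longrightarrow> height (take k w) \<noteq> 0)}"

lemma MAU_abel_eq_iff_first_return:
  assumes u: "length u = n" and v: "length v = n"
  shows "abel_eq u v \<and> MAU u v \<longleftrightarrow> zip u (rev v) \<in> first_return_paths n"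
proof -
  have height_prefix: "height (take k (zip u (rev v))) = 0 \<longleftrightarrow> abel_eq (take k u) (drop (n - k) v)"
    if "k \<le> n" for k
    using that u v by (simp add: take_zip take_rev height_zip abel_eq_iff_count_a)
  have "abel_eq u v \<longleftrightarrow> height (zip u (rev v)) = 0"
    using height_prefix[of n] u v by simp
  moreover have "abel_eq u v \<Longrightarrow> MAU u v \<longleftrightarrow> \<not> (\<exists>x y. external_abel_border u v x y)"
    unfolding MAU_def using internal_border_iff_external_border by blast
  ultimately show ?thesis
    unfolding first_return_paths_def external_border_iff[OF u v] using height_prefix u v by auto
qed

lemma M_eq_eq_card_first_return_paths: "M_eq n = card (first_return_paths n)"
proof -
  let ?S = "{(u, v). length u = n \<and> length v = n \<and> abel_eq u v \<and> MAU u v}"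
  have "bij_betw (\<lambda>(u, v). zip u (rev v)) ?S (first_return_paths n)"
  proof (rule bij_betw_byWitness[where f' = "\<lambda>w. (map fst w, rev (map snd w))"])
    show "(\<lambda>(u, v). zip u (rev v)) ` ?S \<subseteq> first_return_paths n"
      using MAU_abel_eq_iff_first_return by auto
    show "(\<lambda>w. (map fst w, rev (map snd w))) ` first_return_paths n \<subseteq> ?S"
      using MAU_abel_eq_iff_first_return[of "map fst w" n "rev (map snd w)" for w]
      by (auto simp: first_return_paths_def zip_map_fst_snd)
  qed (auto simp: first_return_paths_def zip_map_fst_snd)
  then show ?thesis
    unfolding M_eq_def by (rule bij_betw_same_card)
qed

definition positive_paths :: "nat \<Rightarrow> int \<Rightarrow> (letter \<times> letter) list set" where
  "positive_paths L h =
     {w. length w = L \<and> (\<forall>k. 0 < k \<and> k \<le> L \<longrightarrow> 0 < height (take k w)) \<and> height w = h}"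

lemma positive_paths_0: "positive_paths 0 h = (if h = 0 then {[]} else {})"
  by (auto simp: positive_paths_def)

lemma finite_positive_paths: "finite (positive_paths L h)"
  by (rule finite_subset[OF _ finite_paths_length[of L]]) (auto simp: positive_paths_def)

lemma positive_paths_snoc:
  "w @ [c] \<in> positive_paths (Suc L) h \<longleftrightarrow> w \<in> positive_paths L (h - step c) \<and> 0 < h"
proof -
  have "(\<forall>k. 0 < k \<and> k \<le> Suc L \<longrightarrow> 0 < height (take k (w @ [c]))) \<longleftrightarrow>
        (\<forall>k. 0 < k \<and> k \<le> L \<longrightarrow> 0 < height (take k w)) \<and> 0 < height (w @ [c])"
    if "length w = L"
    using that by (auto simp: le_Suc_eq)
  then show ?thesis
    by (auto simp: positive_paths_def)
qed

lemma positive_paths_Suc_nonpos: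
  assumes "h \<le> 0"
  shows "positive_paths (Suc L) h = {}"
proof -
  have "0 < height w" if "w \<in> positive_paths (Suc L) h" for w
  proof -
    from that have "length w = Suc L" "\<forall>k. 0 < k \<and> k \<le> Suc L \<longrightarrow> 0 < height (take k w)"
      by (simp_all add: positive_paths_def)
    then show ?thesis
      by (metis le_refl take_all zero_less_Suc)
  qed
  then show ?thesis
    using assms by (force simp: positive_paths_def)
qed

lemma positive_paths_Suc:
  assumes "0 < h"
  shows "positive_paths (Suc L) h =
    (\<lambda>(c, w). w @ [c]) ` (SIGMA c:UNIV. positive_paths L (h - step c))"
proof (intro equalityI subsetI)
  fix x assume x: "x \<in> positive_paths (Suc L) h"
  then have "length x = Suc L"
    by (simp add: positive_paths_def)
  then obtain w c where xwc: "x = w @ [c]"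
    by (metis length_Suc_conv_rev)
  with x have "w \<in> positive_paths L (h - step c)"
    using positive_paths_snoc[of w c L h] by simp
  then show "x \<in> (\<lambda>(c, w). w @ [c]) ` (SIGMA c:UNIV. positive_paths L (h - step c))"
    unfolding xwc by (intro image_eqI[of _ _ "(c, w)"]) auto
next
  fix x assume "x \<in> (\<lambda>(c, w). w @ [c]) ` (SIGMA c:UNIV. positive_paths L (h - step c))"
  then obtain c w where "x = w @ [c]" "w \<in> positive_paths L (h - step c)"
    by auto
  then show "x \<in> positive_paths (Suc L) h"
    using assms positive_paths_snoc[of w c L h] by simp
qed

lemma card_positive_paths_Suc:
  assumes "0 < h"
  shows "card (positive_paths (Suc L) h) =
    card (positive_paths L (h - 1)) + 2 * card (positive_paths L h) + card (positive_paths L (h + 1))"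
proof -
  have "inj_on (\<lambda>(c, w). w @ [c]) (SIGMA c:UNIV. positive_paths L (h - step c))"
    by (auto simp: inj_on_def)
  then have "card (positive_paths (Suc L) h) = card (SIGMA c:UNIV. positive_paths L (h - step c))"
    unfolding positive_paths_Suc[OF assms] by (rule card_image)
  also have "\<dots> = (\<Sum>c\<in>UNIV. card (positive_paths L (h - step c)))"
    by (simp add: finite_letter_pair finite_positive_paths)
  finally show ?thesis
    by (simp add: sum_UNIV_letter_pair step_def)
qed

text \<open>
  By reflection, C(2L, L+h-1) - C(2L, L+h+1) weighted paths of L steps lead from 1 to h
  without touching 0; Pascal's rule gives the form below.
\<close>
definition ballot :: "nat \<Rightarrow> nat \<Rightarrow> int" where
  "ballot L h = int ((2 * L + 1) choose (L + h)) - int ((2 * L + 1) choose (L + h + 1))"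

lemma ballot_0_right: "ballot L 0 = 0"
  using binomial_symmetric[of L "2 * L + 1"] by (simp add: ballot_def)

lemma ballot_Suc_Suc:
  "ballot (Suc L) (Suc k) = ballot L k + 2 * ballot L (Suc k) + ballot L (Suc (Suc k))"
proof -
  define n where "n = 2 * L + 1"
  have "2 * Suc L + 1 = Suc (Suc n)" "Suc L + Suc k = Suc (Suc (L + k))"
    by (simp_all add: n_def)
  then show ?thesis
    unfolding ballot_def n_def[symmetric] by simp
qed

lemma Suc_times_ballot_1: "int (Suc L) * ballot L 1 = int ((2 * Suc L) choose (L + 2))"
proof -
  define X where "X = (2 * L + 1) choose (L + 1)"
  define Y where "Y = (2 * L + 1) choose (L + 2)"
  have pascal: "(2 * Suc L) choose (L + 2) = X + Y"
    by (simp add: X_def Y_def)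
  have "(L + 2) * Y = (2 * L + 1) * (2 * L choose (L + 1))"
    using binomial_absorption[of "L + 1" "2 * L + 1"] by (simp add: Y_def)
  also have "\<dots> = L * X"
    using binomial_absorb_comp[of "2 * L + 1" "L + 1"] by (simp add: X_def)
  finally have "int L * int X = (int L + 2) * int Y"
    by (metis of_nat_add of_nat_mult of_nat_numeral)
  then have "int (Suc L) * (int X - int Y) = int X + int Y"
    by (simp add: algebra_simps)
  then show ?thesis
    unfolding ballot_def pascal by (simp add: X_def Y_def)
qed

lemma sum_choose_times_choose_pred:
  "(\<Sum>i=1..m. (m choose i) * (m choose (i - 1))) = (2 * m) choose (m + 1)"
proof -
  have "(2 * m) choose (m + 1) = (\<Sum>k\<le>m + 1. (m choose k) * (m choose (m + 1 - k)))"
    unfolding mult_2 by (rule vandermonde[symmetric])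
  also have "\<dots> = (\<Sum>k=1..m. (m choose k) * (m choose (m + 1 - k)))"
    by (rule sum.mono_neutral_right) (auto simp: not_le Suc_le_eq)
  also have "\<dots> = (\<Sum>i=1..m. (m choose i) * (m choose (i - 1)))"
  proof (intro sum.cong refl)
    fix k assume k: "k \<in> {1..m}"
    have "m choose (m + 1 - k) = m choose (m - (m + 1 - k))"
      by (rule binomial_symmetric) (use k in auto)
    moreover have "m - (m + 1 - k) = k - 1"
      using k by auto
    ultimately show "(m choose k) * (m choose (m + 1 - k)) = (m choose k) * (m choose (k - 1))"
      by simp
  qed
  finally show ?thesis ..
qed

lemma card_positive_paths: "int (card (positive_paths (Suc L) (int h))) = ballot L h"
proof (induction L arbitrary: h)
  case 0
  show ?case
  proof (cases h)
    case 0
    then show ?thesis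
      by (simp add: ballot_0_right positive_paths_Suc_nonpos)
  next
    case (Suc k)
    then have "card (positive_paths (Suc 0) (int h)) = (if k = 0 then 1 else 0)"
      by (simp add: card_positive_paths_Suc positive_paths_0)
    moreover have "ballot 0 h = (if k = 0 then 1 else 0)"
      using Suc by (cases k) (simp_all add: ballot_def)
    ultimately show ?thesis
      by simp
  qed
next
  case (Suc L)
  show ?case
  proof (cases h)
    case 0
    then show ?thesis
      by (simp add: ballot_0_right positive_paths_Suc_nonpos)
  next
    case (Suc k)
    have "int (card (positive_paths (Suc (Suc L)) (int h))) =
      ballot L k + 2 * ballot L (Suc k) + ballot L (Suc (Suc k))"
      using Suc.IH[of k] Suc.IH[of "Suc k"] Suc.IH[of "Suc (Suc k)"]
      by (simp add: card_positive_paths_Suc Suc add_ac)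
    then show ?thesis
      using Suc by (simp add: ballot_Suc_Suc)
  qed
qed

lemma first_return_path_positive:
  assumes w: "w \<in> first_return_paths n" and first: "0 < height (take 1 w)"
    and k: "0 < k" "k < n"
  shows "0 < height (take k w)"
  using k
proof (induction k)
  case (Suc k)
  show ?case
  proof (cases "k = 0")
    case False
    with Suc have "0 < height (take k w)" and "height (take (Suc k) w) \<noteq> 0" and "k < length w"
      using w by (simp_all add: first_return_paths_def)
    then show ?thesis
      using height_take_Suc[of k w] abs_step_le_1[of "w ! k"] by linarith
  qed (use first in simp)
qed simp

definition positive_first_return_paths :: "nat \<Rightarrow> (letter \<times> letter) list set" where
  "positive_first_return_paths n = {w \<in> first_return_paths n. 0 < height (take 1 w)}"

lemma map_swap_first_return_paths [simp]:
  "map prod.swap w \<in> first_return_paths n \<longleftrightarrow> w \<in> first_return_paths n"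
  by (simp add: first_return_paths_def take_map)

lemma card_first_return_paths:
  assumes "2 \<le> n"
  shows "card (first_return_paths n) = 2 * card (positive_first_return_paths n)"
proof -
  let ?P = "positive_first_return_paths n"
  have "first_return_paths n = ?P \<union> map prod.swap ` ?P"
  proof (intro equalityI subsetI)
    fix w assume w: "w \<in> first_return_paths n"
    then have "height (take 1 w) \<noteq> 0"
      using assms by (simp add: first_return_paths_def)
    then have "w \<in> ?P \<or> map prod.swap w \<in> ?P"
      using w by (auto simp: positive_first_return_paths_def take_map)
    then show "w \<in> ?P \<union> map prod.swap ` ?P"
      by (auto intro: image_eqI[where x = "map prod.swap w"])
  qed (auto simp: positive_first_return_paths_def)
  moreover have "?P \<inter> map prod.swap ` ?P = {}"
  proof -
    have "0 < height (take 1 w)" "height (take 1 w) < 0" if "w \<in> ?P" "w \<in> map prod.swap ` ?P" for w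
      using that by (auto simp: positive_first_return_paths_def take_map)
    then show ?thesis
      by fastforce
  qed
  moreover have "finite ?P"
    by (rule finite_subset[OF _ finite_paths_length[of n]])
      (auto simp: positive_first_return_paths_def first_return_paths_def)
  moreover have "card (map prod.swap ` ?P) = card ?P"
    by (rule card_image) (simp add: inj_on_mapI)
  ultimately show ?thesis
    by (simp add: card_Un_disjoint)
qed

lemma positive_first_return_paths_Suc:
  assumes "0 < m"
  shows "positive_first_return_paths (Suc m) = (\<lambda>w. w @ [(b, a)]) ` positive_paths m 1"
proof (intro equalityI subsetI)
  fix x assume x: "x \<in> positive_first_return_paths (Suc m)"
  then have "length x = Suc m"
    by (simp add: positive_first_return_paths_def first_return_paths_def)
  then obtain w c where xwc: "x = w @ [c]" and len: "length w = m"
    by (metis length_Suc_conv_rev)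
  have pos: "0 < height (take k w)" if "0 < k" "k \<le> m" for k
    using first_return_path_positive[of x "Suc m" k] x that xwc len
    by (simp add: positive_first_return_paths_def)
  moreover have "height w + step c = 0"
    using x xwc by (simp add: positive_first_return_paths_def first_return_paths_def)
  moreover have "0 < height w"
    using pos[of m] assms len by simp
  ultimately have "height w = 1" "step c = -1"
    using abs_step_le_1[of c] by linarith+
  then have "c = (b, a)" and "w \<in> positive_paths m 1"
    using pos len by (simp_all add: step_eq_minus_one_iff positive_paths_def)
  then show "x \<in> (\<lambda>w. w @ [(b, a)]) ` positive_paths m 1"
    using xwc by blast
next
  fix x assume "x \<in> (\<lambda>w. w @ [(b, a)]) ` positive_paths m 1"
  then obtain w where "x = w @ [(b, a)]" "w \<in> positive_paths m 1"
    by blast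
  then show "x \<in> positive_first_return_paths (Suc m)"
    using assms
    by (auto simp: positive_first_return_paths_def first_return_paths_def positive_paths_def step_def)
qed

theorem mainTheorem9:
  fixes n :: nat
  assumes "n \<ge> 2"
  shows "real (M_eq n) =
    2 * (\<Sum>i=1..n-1. (1 / real (n - 1)) * real ((n - 1) choose i) * real ((n - 1) choose (i - 1)))"
proof -
  define L where "L = n - 2"
  have n: "n = Suc (Suc L)" "n - 1 = Suc L"
    using assms by (simp_all add: L_def)
  have "M_eq n = 2 * card (positive_paths (Suc L) 1)"
    using card_first_return_paths[OF assms] positive_first_return_paths_Suc[of "Suc L"]
    by (simp add: M_eq_eq_card_first_return_paths n card_image inj_on_def)
  then have "int (M_eq n) = 2 * ballot L 1"
    using card_positive_paths[of L 1] by simp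
  then have "real (M_eq n) = 2 * real_of_int (ballot L 1)"
    by (metis of_int_of_nat_eq of_int_mult of_int_numeral)
  also have "\<dots> = 2 * (real ((2 * Suc L) choose (L + 2)) / real (Suc L))"
    using arg_cong[OF Suc_times_ballot_1[of L], of real_of_int] by (simp add: field_simps)
  also have "\<dots> = 2 * ((1 / real (Suc L)) *
      real (\<Sum>i=1..Suc L. (Suc L choose i) * (Suc L choose (i - 1))))"
    unfolding sum_choose_times_choose_pred by simp
  finally show ?thesis
    unfolding n(2) by (simp only: of_nat_sum of_nat_mult sum_distrib_left mult.assoc)
qed

end
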